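(* Let $1\le p\le\infty$ and $f,f',b,b'\in\mathcal{L}^p(I)$. Then $$\|(f*_Tb)-(f'*_Tb')\|_p\le\frac{1}{1-\Lambda}\left(\|f-f'\|_p+\Lambda\|b-b'\|_p\right).$$ For $0<p<1$ the same inequality holds with $\|g-h\|_p$ replaced by $d_p(g,h)=\int_I|g-h|^p\,dx$ and $\Lambda$ replaced by $\Lambda^p$.
   Context: Let $N\ge 2$, $I=[x_0,x_N]\subset\mathbb{R}$ and $\Delta: x_0<x_1<\dots<x_N$ a partition of $I$. For $n=1,\dots,N$ let $L_n(x)=a_nx+b_n$ be the affine map with $L_n(x_0)=x_{n-1}$, $L_n(x_N)=x_n$; set $I_1=[x_0,x_1]$, $I_n=(x_{n-1},x_n]$ for $n\ge 2$. Let $\alpha=(\alpha_1,\dots,\alpha_N)\in(\mathcal{L}^\infty(I))^N$ with $\Lambda:=\operatorname{ess\,sup}\{|\alpha_n(x)|:x\in I,\ n=1,\dots,N\}<1$. For $0<p\le\infty$ and $f,b\in\mathcal{L}^p(I)$, the fractal convolution $f*_Tb$ is the unique fixed point in $\mathcal{L}^p(I)$ of the contraction $Tg(x):=f(x)+\alpha_n(L_n^{-1}(x))\,(g-b)(L_n^{-1}(x))$, $x\in I_n$, $n=1,\dots,N$. The partition, the maps $L_n$ and $\alpha$ are fixed. *)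

theory Defs
  imports "HOL-Analysis.Analysis" "HOL-Probability.Essential_Supremum"
begin

definition Ival :: "(nat \<Rightarrow> real) \<Rightarrow> nat \<Rightarrow> real set" where
  "Ival x N = {x 0 .. x N}"

definition Iseg :: "(nat \<Rightarrow> real) \<Rightarrow> nat \<Rightarrow> real set" where
  "Iseg x n = (if n = 1 then {x 0 .. x 1} else {x (n - 1) <.. x n})"

definition Lmap :: "(nat \<Rightarrow> real) \<Rightarrow> nat \<Rightarrow> nat \<Rightarrow> real \<Rightarrow> real" where
  "Lmap x N n t = x (n - 1) + (x n - x (n - 1)) / (x N - x 0) * (t - x 0)"

definition Linv :: "(nat \<Rightarrow> real) \<Rightarrow> nat \<Rightarrow> nat \<Rightarrow> real \<Rightarrow> real" where
  "Linv x N n t = x 0 + (x N - x 0) / (x n - x (n - 1)) * (t - x (n - 1))"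

definition Lam :: "(nat \<Rightarrow> real) \<Rightarrow> nat \<Rightarrow> (nat \<Rightarrow> real \<Rightarrow> real) \<Rightarrow> ereal" where
  "Lam x N \<alpha> = esssup (lebesgue_on (Ival x N)) (\<lambda>t. Max ((\<lambda>n. ereal \<bar>\<alpha> n t\<bar>) ` {1..N}))"

definition memLp :: "real set \<Rightarrow> ennreal \<Rightarrow> (real \<Rightarrow> real) \<Rightarrow> bool" where
  "memLp I p g \<longleftrightarrow> g \<in> borel_measurable (lebesgue_on I) \<and>
     (if p = \<infinity> then esssup (lebesgue_on I) (\<lambda>t. ereal \<bar>g t\<bar>) < \<infinity>
      else integrable (lebesgue_on I) (\<lambda>t. \<bar>g t\<bar> powr enn2real p))"

definition Lp_norm :: "real set \<Rightarrow> ennreal \<Rightarrow> (real \<Rightarrow> real) \<Rightarrow> real" where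
  "Lp_norm I p g =
     (if p = \<infinity> then real_of_ereal (esssup (lebesgue_on I) (\<lambda>t. ereal \<bar>g t\<bar>))
      else (\<integral>t. \<bar>g t\<bar> powr enn2real p \<partial>lebesgue_on I) powr (1 / enn2real p))"

definition dp :: "real set \<Rightarrow> real \<Rightarrow> (real \<Rightarrow> real) \<Rightarrow> (real \<Rightarrow> real) \<Rightarrow> real" where
  "dp I p g h = (\<integral>t. \<bar>g t - h t\<bar> powr p \<partial>lebesgue_on I)"

text \<open>The operator T (on I; the pieces I_n are pairwise disjoint, so the sum selects the
  unique n with t in I_n).\<close>
definition fcT :: "(nat \<Rightarrow> real) \<Rightarrow> nat \<Rightarrow> (nat \<Rightarrow> real \<Rightarrow> real) \<Rightarrow>
    (real \<Rightarrow> real) \<Rightarrow> (real \<Rightarrow> real) \<Rightarrow> (real \<Rightarrow> real) \<Rightarrow> real \<Rightarrow> real" where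
  "fcT x N \<alpha> f b g t = f t + (\<Sum>n\<in>{1..N}. if t \<in> Iseg x n then
      \<alpha> n (Linv x N n t) * (g (Linv x N n t) - b (Linv x N n t)) else 0)"

definition frac_conv :: "(nat \<Rightarrow> real) \<Rightarrow> nat \<Rightarrow> (nat \<Rightarrow> real \<Rightarrow> real) \<Rightarrow> ennreal \<Rightarrow>
    (real \<Rightarrow> real) \<Rightarrow> (real \<Rightarrow> real) \<Rightarrow> (real \<Rightarrow> real)" where
  "frac_conv x N \<alpha> p f b = (SOME h. memLp (Ival x N) p h \<and>
      (AE t in lebesgue_on (Ival x N). fcT x N \<alpha> f b h t = h t))"

end

theory Submission
  imports Defs
begin

(* On I_n the operator reads T g = f + A * (g o tau - b o tau), where tau : I -> I equals L_n^-1
   and A = alpha_n o tau.  As tau maps each I_n affinely onto I and the lengths of the I_n add up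
   to that of I, tau preserves Lebesgue measure on I; hence composing with tau preserves
   integrals, essential suprema and null sets, and |A| <= Lambda almost everywhere.  Subtracting
   the fixed point equations of h = f *_T b and h' = f' *_T b' gives, almost everywhere,
     |h - h'| <= |f - f'| + Lambda |h - h'| o tau + Lambda |b - b'| o tau,
   and taking norms (Minkowski for p >= 1, subadditivity of t^p for p < 1) and solving for the
   norm of h - h' yields the estimate.

   Since f *_T b is defined by Hilbert choice, one also has to show that T has a fixed point in
   L^p: it is the Neumann series sum_k A(t) A(tau t) ... A(tau^(k-1) t) c(tau^k t) for
   c = f - A * (b o tau). *)

lemma powr_add_le_two_powr:
  fixes a b q :: real
  assumes "0 \<le> a" "0 \<le> b" "0 < q"
  shows "(a + b) powr q \<le> 2 powr q * (a powr q + b powr q)"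
proof -
  have "(a + b) powr q \<le> (2 * max a b) powr q" using assms by (intro powr_mono2) auto
  also have "\<dots> = 2 powr q * max a b powr q" using assms by (simp add: powr_mult)
  also have "max a b powr q \<le> a powr q + b powr q" by (simp add: max_def)
  finally show ?thesis by simp
qed

lemma powr_add_le_add_powr:
  fixes a b q :: real
  assumes a: "0 \<le> a" and b: "0 \<le> b" and q: "0 < q" "q \<le> 1"
  shows "(a + b) powr q \<le> a powr q + b powr q"
proof (cases "a = 0 \<or> b = 0")
  case True then show ?thesis using a b by auto
next
  case False
  then have ab: "0 < a" "0 < b" using a b by auto
  have "(a + b) powr q = (a + b) powr (q - 1) * (a + b)"
    using ab by (simp add: powr_diff)
  also have "\<dots> = (a + b) powr (q - 1) * a + (a + b) powr (q - 1) * b"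
    by (simp add: distrib_left)
  also have "\<dots> \<le> a powr (q - 1) * a + b powr (q - 1) * b"
    using ab q by (intro add_mono mult_right_mono powr_mono2') auto
  also have "\<dots> = a powr q + b powr q"
    using ab by (simp add: powr_diff)
  finally show ?thesis .
qed

lemma powr_convex_combination:
  fixes X Y l q :: real
  assumes q: "1 \<le> q" and X: "0 \<le> X" and Y: "0 \<le> Y" and l: "0 \<le> l" "l \<le> 1"
  shows "(l * X + (1 - l) * Y) powr q \<le> l * X powr q + (1 - l) * Y powr q"
proof -
  have scale: "(m * Z) powr q \<le> m * Z powr q" if "0 \<le> m" "m \<le> 1" "0 \<le> Z" for m Z :: real
  proof -
    have "m powr q \<le> m powr 1" if "0 < m" using q \<open>m \<le> 1\<close> that by (intro powr_mono') auto
    then have "m powr q \<le> m" using \<open>0 \<le> m\<close> by (cases "m = 0") auto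
    then show ?thesis using that by (simp add: powr_mult mult_right_mono)
  qed
  consider "X = 0" | "Y = 0" | "0 < X" "0 < Y" using X Y by linarith
  then show ?thesis
  proof cases
    case 1 then show ?thesis using scale[of "1 - l" Y] l Y by simp
  next
    case 2 then show ?thesis using scale[of l X] l X by simp
  next
    case 3
    then show ?thesis
      using convex_onD[OF powr_convex[OF q], of "1 - l" X Y] l by simp
  qed
qed

lemma integrable_powr_dominated:
  fixes u v w :: "'a \<Rightarrow> real" and q :: real
  assumes q: "0 < q" and [measurable]: "w \<in> borel_measurable M"
    and iu: "integrable M (\<lambda>t. \<bar>u t\<bar> powr q)" and iv: "integrable M (\<lambda>t. \<bar>v t\<bar> powr q)"
    and dom: "AE t in M. \<bar>w t\<bar> \<le> \<bar>u t\<bar> + \<bar>v t\<bar>"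
  shows "integrable M (\<lambda>t. \<bar>w t\<bar> powr q)"
proof (rule Bochner_Integration.integrable_bound)
  show "integrable M (\<lambda>t. 2 powr q * (\<bar>u t\<bar> powr q + \<bar>v t\<bar> powr q))"
    using iu iv by (intro integrable_mult_right Bochner_Integration.integrable_add)
  show "AE t in M. norm (\<bar>w t\<bar> powr q) \<le> norm (2 powr q * (\<bar>u t\<bar> powr q + \<bar>v t\<bar> powr q))"
    using dom
  proof eventually_elim
    case (elim t)
    have "\<bar>w t\<bar> powr q \<le> (\<bar>u t\<bar> + \<bar>v t\<bar>) powr q" using elim q by (intro powr_mono2) auto
    also have "\<dots> \<le> 2 powr q * (\<bar>u t\<bar> powr q + \<bar>v t\<bar> powr q)" using q by (intro powr_add_le_two_powr) auto
    finally show ?case by simp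
  qed
qed measurable

lemma powr_add_le_weighted:
  fixes x y a b q :: real
  assumes q: "1 \<le> q" and xy: "0 \<le> x" "0 \<le> y" and ab: "0 < a" "0 < b"
  shows "(x + y) powr q \<le> (a + b) powr q * (a / (a + b) * (x / a) powr q + b / (a + b) * (y / b) powr q)"
proof -
  have l: "1 - a / (a + b) = b / (a + b)" using ab by (simp add: field_simps)
  have "x + y = (a + b) * (a / (a + b) * (x / a) + (1 - a / (a + b)) * (y / b))"
    using ab unfolding l by (simp add: add_divide_distrib[symmetric])
  then have "(x + y) powr q = (a + b) powr q * (a / (a + b) * (x / a) + (1 - a / (a + b)) * (y / b)) powr q"
    by (simp add: powr_mult)
  also have "\<dots> \<le> (a + b) powr q * (a / (a + b) * (x / a) powr q + (1 - a / (a + b)) * (y / b) powr q)"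
    using ab xy by (intro mult_left_mono powr_convex_combination[OF q]) auto
  finally show ?thesis unfolding l .
qed

lemma integral_powr_mono_AE:
  fixes w y :: "'a \<Rightarrow> real"
  assumes q: "0 < q" and "integrable M (\<lambda>t. \<bar>w t\<bar> powr q)" "integrable M (\<lambda>t. \<bar>y t\<bar> powr q)"
    and "AE t in M. \<bar>w t\<bar> \<le> \<bar>y t\<bar>"
  shows "(\<integral>t. \<bar>w t\<bar> powr q \<partial>M) \<le> (\<integral>t. \<bar>y t\<bar> powr q \<partial>M)"
  using assms by (intro integral_mono_AE) (auto elim!: eventually_mono intro!: powr_mono2)

lemma Minkowski_inequality_powr:
  fixes u v w :: "'a \<Rightarrow> real" and q :: real
  assumes q: "1 \<le> q" and w: "w \<in> borel_measurable M"
    and iu: "integrable M (\<lambda>t. \<bar>u t\<bar> powr q)" and iv: "integrable M (\<lambda>t. \<bar>v t\<bar> powr q)"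
    and dom: "AE t in M. \<bar>w t\<bar> \<le> \<bar>u t\<bar> + \<bar>v t\<bar>"
  shows "(\<integral>t. \<bar>w t\<bar> powr q \<partial>M) powr (1 / q)
           \<le> (\<integral>t. \<bar>u t\<bar> powr q \<partial>M) powr (1 / q) + (\<integral>t. \<bar>v t\<bar> powr q \<partial>M) powr (1 / q)"
proof -
  have q0: "0 < q" using q by simp
  have iw: "integrable M (\<lambda>t. \<bar>w t\<bar> powr q)" by (rule integrable_powr_dominated[OF q0 w iu iv dom])
  define U V W where "U = (\<integral>t. \<bar>u t\<bar> powr q \<partial>M)" and "V = (\<integral>t. \<bar>v t\<bar> powr q \<partial>M)"
    and "W = (\<integral>t. \<bar>w t\<bar> powr q \<partial>M)"
  define a b where "a = U powr (1 / q)" and "b = V powr (1 / q)"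
  have aq: "a powr q = U" and bq: "b powr q = V"
    using q0 by (simp_all add: a_def b_def U_def V_def powr_powr)
  have vanish: "AE t in M. y t = 0" if "(\<integral>t. \<bar>y t\<bar> powr q \<partial>M) = 0"
    and "integrable M (\<lambda>t. \<bar>y t\<bar> powr q)" for y :: "'a \<Rightarrow> real"
    using integral_nonneg_eq_0_iff_AE[OF that(2)] that(1) by simp
  consider "a = 0" | "b = 0" | "0 < a" "0 < b" by (force simp: a_def b_def)
  then have "W \<le> (a + b) powr q"
  proof cases
    case 1
    then have "AE t in M. \<bar>w t\<bar> \<le> \<bar>v t\<bar>" using vanish[OF _ iu] dom aq q0 by (auto simp: U_def)
    then show ?thesis using integral_powr_mono_AE[OF q0 iw iv] bq 1 by (simp add: W_def V_def)
  next
    case 2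
    then have "AE t in M. \<bar>w t\<bar> \<le> \<bar>u t\<bar>" using vanish[OF _ iv] dom bq q0 by (auto simp: V_def)
    then show ?thesis using integral_powr_mono_AE[OF q0 iw iu] aq 2 by (simp add: W_def U_def)
  next
    case 3
    have "W \<le> (\<integral>t. (a + b) powr q * (a / (a + b) * (\<bar>u t\<bar> powr q / U) + b / (a + b) * (\<bar>v t\<bar> powr q / V)) \<partial>M)"
      unfolding W_def
    proof (rule integral_mono_AE[OF iw])
      show "integrable M (\<lambda>t. (a + b) powr q * (a / (a + b) * (\<bar>u t\<bar> powr q / U) + b / (a + b) * (\<bar>v t\<bar> powr q / V)))"
        using iu iv by (intro integrable_mult_right Bochner_Integration.integrable_add integrable_divide)
      show "AE t in M. \<bar>w t\<bar> powr q
          \<le> (a + b) powr q * (a / (a + b) * (\<bar>u t\<bar> powr q / U) + b / (a + b) * (\<bar>v t\<bar> powr q / V))"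
        using dom
      proof eventually_elim
        case (elim t)
        have "\<bar>w t\<bar> powr q \<le> (\<bar>u t\<bar> + \<bar>v t\<bar>) powr q" using elim q0 by (intro powr_mono2) auto
        also have "\<dots> \<le> (a + b) powr q * (a / (a + b) * (\<bar>u t\<bar> / a) powr q + b / (a + b) * (\<bar>v t\<bar> / b) powr q)"
          using 3 by (intro powr_add_le_weighted[OF q]) auto
        finally show ?case using 3 aq bq by (simp add: powr_divide)
      qed
    qed
    also have "\<dots> = (a + b) powr q * (a / (a + b) * (U / U) + b / (a + b) * (V / V))"
      using iu iv unfolding U_def V_def
      by (simp only: integral_mult_right_zero integral_divide_zero Bochner_Integration.integral_add
          integrable_mult_right integrable_divide)
    also have "\<dots> = (a + b) powr q * (a / (a + b) + b / (a + b))"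
      using 3 aq bq by auto
    also have "\<dots> = (a + b) powr q" using 3 by (simp add: add_divide_distrib[symmetric])
    finally show ?thesis .
  qed
  then have "W powr (1 / q) \<le> ((a + b) powr q) powr (1 / q)" using q0 by (intro powr_mono2) (auto simp: W_def)
  also have "\<dots> = a + b" using q0 by (simp add: powr_powr a_def b_def)
  finally show ?thesis by (simp add: W_def a_def b_def U_def V_def)
qed

lemma finite_esssup_abs:
  fixes g :: "'a \<Rightarrow> real"
  assumes M: "emeasure M (space M) \<noteq> 0" and fin: "esssup M (\<lambda>t. ereal \<bar>g t\<bar>) < \<infinity>"
  defines "K \<equiv> real_of_ereal (esssup M (\<lambda>t. ereal \<bar>g t\<bar>))"
  shows "esssup M (\<lambda>t. ereal \<bar>g t\<bar>) = ereal K" and "0 \<le> K" and "AE t in M. \<bar>g t\<bar> \<le> K"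
proof -
  have "0 \<le> esssup M (\<lambda>t. ereal \<bar>g t\<bar>)"
    using esssup_mono[of "\<lambda>t. 0" M "\<lambda>t. ereal \<bar>g t\<bar>"] esssup_const[OF M, of "0::ereal"] by simp
  then show K: "esssup M (\<lambda>t. ereal \<bar>g t\<bar>) = ereal K" and "0 \<le> K"
    using fin unfolding K_def by (cases "esssup M (\<lambda>t. ereal \<bar>g t\<bar>)"; simp)+
  show "AE t in M. \<bar>g t\<bar> \<le> K"
    using esssup_AE[of "\<lambda>t. ereal \<bar>g t\<bar>" M] by (simp add: K)
qed

locale measure_preserving =
  fixes M :: "'a measure" and \<tau> :: "'a \<Rightarrow> 'a"
  assumes measurable_map [measurable]: "\<tau> \<in> M \<rightarrow>\<^sub>M M"
    and distr_eq: "distr M M \<tau> = M"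
begin

lemma nn_integral_comp:
  "g \<in> borel_measurable M \<Longrightarrow> (\<integral>\<^sup>+t. g (\<tau> t) \<partial>M) = (\<integral>\<^sup>+t. g t \<partial>M)"
  using nn_integral_distr[OF measurable_map, of g] by (simp add: distr_eq)

lemma integrable_comp_iff:
  fixes g :: "'a \<Rightarrow> real"
  shows "g \<in> borel_measurable M \<Longrightarrow> integrable M (\<lambda>t. g (\<tau> t)) \<longleftrightarrow> integrable M g"
  using integrable_distr_eq[OF measurable_map, of g] by (simp add: distr_eq)

lemma integral_comp:
  fixes g :: "'a \<Rightarrow> real"
  shows "g \<in> borel_measurable M \<Longrightarrow> (\<integral>t. g (\<tau> t) \<partial>M) = (\<integral>t. g t \<partial>M)"
  using integral_distr[OF measurable_map, of g] by (simp add: distr_eq)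

lemma integrable_powr_comp_iff:
  fixes g :: "'a \<Rightarrow> real"
  assumes [measurable]: "g \<in> borel_measurable M"
  shows "integrable M (\<lambda>t. \<bar>g (\<tau> t)\<bar> powr q) \<longleftrightarrow> integrable M (\<lambda>t. \<bar>g t\<bar> powr q)"
  by (rule integrable_comp_iff[of "\<lambda>s. \<bar>g s\<bar> powr q"]) measurable

lemma integral_powr_comp:
  fixes g :: "'a \<Rightarrow> real"
  assumes [measurable]: "g \<in> borel_measurable M"
  shows "(\<integral>t. \<bar>g (\<tau> t)\<bar> powr q \<partial>M) = (\<integral>t. \<bar>g t\<bar> powr q \<partial>M)"
  by (rule integral_comp[of "\<lambda>s. \<bar>g s\<bar> powr q"]) measurable

lemma AE_comp:
  assumes "AE s in M. P s"
  shows "AE t in M. P (\<tau> t)"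
proof -
  obtain Z where Z: "{s \<in> space M. \<not> P s} \<subseteq> Z" "emeasure M Z = 0" "Z \<in> sets M"
    using assms by (rule AE_E)
  have "emeasure M (\<tau> -` Z \<inter> space M) = emeasure (distr M M \<tau>) Z"
    using Z by (simp add: emeasure_distr)
  then have "\<tau> -` Z \<inter> space M \<in> null_sets M"
    using Z measurable_sets[OF measurable_map, of Z] by (simp add: distr_eq null_sets_def)
  moreover have "{t \<in> space M. \<not> P (\<tau> t)} \<subseteq> \<tau> -` Z \<inter> space M"
    using Z(1) measurable_space[OF measurable_map] by auto
  ultimately show ?thesis by (rule AE_I')
qed

lemma esssup_contraction_estimate:
  fixes D F B :: "'a \<Rightarrow> real"
  assumes M: "emeasure M (space M) \<noteq> 0" and L: "0 \<le> L" "L < 1"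
    and [measurable]: "D \<in> borel_measurable M"
    and eD: "esssup M (\<lambda>t. ereal \<bar>D t\<bar>) < \<infinity>" and eF: "esssup M (\<lambda>t. ereal \<bar>F t\<bar>) < \<infinity>"
    and eB: "esssup M (\<lambda>t. ereal \<bar>B t\<bar>) < \<infinity>"
    and dom: "AE t in M. \<bar>D t\<bar> \<le> \<bar>F t\<bar> + L * \<bar>D (\<tau> t)\<bar> + L * \<bar>B (\<tau> t)\<bar>"
  shows "real_of_ereal (esssup M (\<lambda>t. ereal \<bar>D t\<bar>)) \<le> 1 / (1 - L) *
     (real_of_ereal (esssup M (\<lambda>t. ereal \<bar>F t\<bar>)) + L * real_of_ereal (esssup M (\<lambda>t. ereal \<bar>B t\<bar>)))"
proof -
  define nD nF nB where "nD = real_of_ereal (esssup M (\<lambda>t. ereal \<bar>D t\<bar>))"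
    and "nF = real_of_ereal (esssup M (\<lambda>t. ereal \<bar>F t\<bar>))"
    and "nB = real_of_ereal (esssup M (\<lambda>t. ereal \<bar>B t\<bar>))"
  note D = finite_esssup_abs[OF M eD, folded nD_def]
  note F = finite_esssup_abs[OF M eF, folded nF_def]
  note B = finite_esssup_abs[OF M eB, folded nB_def]
  have "esssup M (\<lambda>t. ereal \<bar>D t\<bar>) \<le> ereal (nF + L * nD + L * nB)"
  proof (rule esssup_I)
    show "AE t in M. ereal \<bar>D t\<bar> \<le> ereal (nF + L * nD + L * nB)"
      using dom F(3) AE_comp[OF D(3)] AE_comp[OF B(3)]
    proof eventually_elim
      case (elim t)
      have "L * \<bar>D (\<tau> t)\<bar> \<le> L * nD" "L * \<bar>B (\<tau> t)\<bar> \<le> L * nB"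
        using elim L by (auto intro: mult_left_mono)
      then show ?case using elim by simp
    qed
  qed measurable
  then have "nD \<le> nF + L * nD + L * nB" using D(1) by simp
  then show ?thesis using L by (simp add: field_simps nD_def nF_def nB_def)
qed

lemma integral_powr_contraction_estimate:
  fixes D F B :: "'a \<Rightarrow> real" and q :: real
  assumes q: "0 < q" "q \<le> 1" and L: "0 \<le> L" "L < 1"
    and [measurable]: "D \<in> borel_measurable M" "B \<in> borel_measurable M"
    and iD: "integrable M (\<lambda>t. \<bar>D t\<bar> powr q)" and iF: "integrable M (\<lambda>t. \<bar>F t\<bar> powr q)"
    and iB: "integrable M (\<lambda>t. \<bar>B t\<bar> powr q)"
    and dom: "AE t in M. \<bar>D t\<bar> \<le> \<bar>F t\<bar> + L * \<bar>D (\<tau> t)\<bar> + L * \<bar>B (\<tau> t)\<bar>"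
  shows "(\<integral>t. \<bar>D t\<bar> powr q \<partial>M)
           \<le> 1 / (1 - L powr q) * ((\<integral>t. \<bar>F t\<bar> powr q \<partial>M) + L powr q * (\<integral>t. \<bar>B t\<bar> powr q \<partial>M))"
proof -
  define nD nF nB where "nD = (\<integral>t. \<bar>D t\<bar> powr q \<partial>M)" and "nF = (\<integral>t. \<bar>F t\<bar> powr q \<partial>M)"
    and "nB = (\<integral>t. \<bar>B t\<bar> powr q \<partial>M)"
  have iDt: "integrable M (\<lambda>t. \<bar>D (\<tau> t)\<bar> powr q)" and iBt: "integrable M (\<lambda>t. \<bar>B (\<tau> t)\<bar> powr q)"
    using iD iB by (simp_all add: integrable_powr_comp_iff)
  have "nD \<le> (\<integral>t. \<bar>F t\<bar> powr q + L powr q * \<bar>D (\<tau> t)\<bar> powr q + L powr q * \<bar>B (\<tau> t)\<bar> powr q \<partial>M)"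
    unfolding nD_def
  proof (rule integral_mono_AE[OF iD])
    show "integrable M (\<lambda>t. \<bar>F t\<bar> powr q + L powr q * \<bar>D (\<tau> t)\<bar> powr q + L powr q * \<bar>B (\<tau> t)\<bar> powr q)"
      using iF iDt iBt by (intro Bochner_Integration.integrable_add integrable_mult_right)
    show "AE t in M. \<bar>D t\<bar> powr q
            \<le> \<bar>F t\<bar> powr q + L powr q * \<bar>D (\<tau> t)\<bar> powr q + L powr q * \<bar>B (\<tau> t)\<bar> powr q"
      using dom
    proof eventually_elim
      case (elim t)
      have "\<bar>D t\<bar> powr q \<le> (\<bar>F t\<bar> + (L * \<bar>D (\<tau> t)\<bar> + L * \<bar>B (\<tau> t)\<bar>)) powr q"
        using elim q by (intro powr_mono2) (auto simp: add.assoc)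
      also have "\<dots> \<le> \<bar>F t\<bar> powr q + ((L * \<bar>D (\<tau> t)\<bar>) powr q + (L * \<bar>B (\<tau> t)\<bar>) powr q)"
        using q L by (intro powr_add_le_add_powr add_left_mono order.trans[OF powr_add_le_add_powr]) auto
      finally show ?case using L by (simp add: powr_mult add.assoc)
    qed
  qed
  also have "\<dots> = nF + L powr q * nD + L powr q * nB"
    using iF iDt iBt by (simp add: nF_def nD_def nB_def integral_powr_comp)
  finally have "nD \<le> nF + L powr q * nD + L powr q * nB" .
  moreover have "L powr q < 1" using q L by (cases "L = 0") (simp_all add: powr01_less_one)
  ultimately show ?thesis by (simp add: field_simps nD_def nF_def nB_def)
qed

lemma norm_powr_scaled_comp:
  fixes g :: "'a \<Rightarrow> real" and q :: real
  assumes q: "0 < q" and L: "0 \<le> L" and [measurable]: "g \<in> borel_measurable M"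
    and ig: "integrable M (\<lambda>t. \<bar>g t\<bar> powr q)"
  shows "integrable M (\<lambda>t. \<bar>L * g (\<tau> t)\<bar> powr q)"
    and "(\<integral>t. \<bar>L * g (\<tau> t)\<bar> powr q \<partial>M) powr (1 / q) = L * (\<integral>t. \<bar>g t\<bar> powr q \<partial>M) powr (1 / q)"
proof -
  have scale: "\<bar>L * g (\<tau> t)\<bar> powr q = L powr q * \<bar>g (\<tau> t)\<bar> powr q" for t
    using L by (simp add: abs_mult powr_mult)
  show "integrable M (\<lambda>t. \<bar>L * g (\<tau> t)\<bar> powr q)"
    unfolding scale using ig by (simp add: integrable_powr_comp_iff)
  have "(\<integral>t. \<bar>L * g (\<tau> t)\<bar> powr q \<partial>M) = L powr q * (\<integral>t. \<bar>g t\<bar> powr q \<partial>M)"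
    unfolding scale by (simp add: integral_powr_comp)
  then show "(\<integral>t. \<bar>L * g (\<tau> t)\<bar> powr q \<partial>M) powr (1 / q) = L * (\<integral>t. \<bar>g t\<bar> powr q \<partial>M) powr (1 / q)"
    using L q by (simp add: powr_mult powr_powr)
qed

lemma Lp_contraction_estimate:
  fixes D F B :: "'a \<Rightarrow> real" and q :: real
  assumes q: "1 \<le> q" and L: "0 \<le> L" "L < 1"
    and [measurable]: "D \<in> borel_measurable M" "B \<in> borel_measurable M"
    and iD: "integrable M (\<lambda>t. \<bar>D t\<bar> powr q)" and iF: "integrable M (\<lambda>t. \<bar>F t\<bar> powr q)"
    and iB: "integrable M (\<lambda>t. \<bar>B t\<bar> powr q)"
    and dom: "AE t in M. \<bar>D t\<bar> \<le> \<bar>F t\<bar> + L * \<bar>D (\<tau> t)\<bar> + L * \<bar>B (\<tau> t)\<bar>"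
  shows "(\<integral>t. \<bar>D t\<bar> powr q \<partial>M) powr (1 / q)
           \<le> 1 / (1 - L) * ((\<integral>t. \<bar>F t\<bar> powr q \<partial>M) powr (1 / q) + L * (\<integral>t. \<bar>B t\<bar> powr q \<partial>M) powr (1 / q))"
proof -
  have q0: "0 < q" using q by simp
  define G where "G t = L * \<bar>D (\<tau> t)\<bar> + L * \<bar>B (\<tau> t)\<bar>" for t
  have G_dom: "AE t in M. \<bar>G t\<bar> \<le> \<bar>L * D (\<tau> t)\<bar> + \<bar>L * B (\<tau> t)\<bar>"
    using L by (auto simp: G_def abs_mult)
  note sD = norm_powr_scaled_comp[OF q0 L(1) _ iD] and sB = norm_powr_scaled_comp[OF q0 L(1) _ iB]
  have [measurable]: "G \<in> borel_measurable M" unfolding G_def by measurable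
  have iG: "integrable M (\<lambda>t. \<bar>G t\<bar> powr q)"
    by (rule integrable_powr_dominated[OF q0 _ sD(1) sB(1) G_dom]) measurable
  have "AE t in M. \<bar>D t\<bar> \<le> \<bar>F t\<bar> + \<bar>G t\<bar>"
    using dom by eventually_elim (use L in \<open>simp add: G_def\<close>)
  from Minkowski_inequality_powr[OF q _ iF iG this]
    Minkowski_inequality_powr[OF q _ sD(1) sB(1) G_dom] sD(2) sB(2)
  have "(\<integral>t. \<bar>D t\<bar> powr q \<partial>M) powr (1 / q) \<le> (\<integral>t. \<bar>F t\<bar> powr q \<partial>M) powr (1 / q)
      + (L * (\<integral>t. \<bar>D t\<bar> powr q \<partial>M) powr (1 / q) + L * (\<integral>t. \<bar>B t\<bar> powr q \<partial>M) powr (1 / q))"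
    by (simp add: G_def)
  then show ?thesis using L by (simp add: field_simps)
qed

lemma funpow: "measure_preserving M (\<tau> ^^ k)"
proof (induction k)
  case 0 then show ?case by unfold_locales (simp_all add: distr_id2)
next
  case (Suc k)
  then interpret k: measure_preserving M "\<tau> ^^ k" .
  have "distr M M (\<tau> ^^ Suc k) = distr (distr M M \<tau>) M (\<tau> ^^ k)"
    by (simp add: distr_distr funpow_Suc_right del: funpow.simps)
  then show ?case
    by unfold_locales (simp_all add: distr_eq k.distr_eq funpow_Suc_right o_def del: funpow.simps)
qed

lemmas measurable_funpow [measurable] = measure_preserving.measurable_map[OF funpow]
lemmas nn_integral_comp_funpow = measure_preserving.nn_integral_comp[OF funpow]
lemmas AE_comp_funpow = measure_preserving.AE_comp[OF funpow]

end

locale weighted_composition = measure_preserving +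
  fixes A :: "'a \<Rightarrow> real" and L :: real
  assumes measurable_weight [measurable]: "A \<in> borel_measurable M"
    and abs_weight_le: "\<bar>A t\<bar> \<le> L"
    and L_less_1: "L < 1"
begin

lemma L_nonneg: "0 \<le> L"
  using abs_weight_le[of undefined] by linarith

definition cocycle :: "nat \<Rightarrow> 'a \<Rightarrow> real" where
  "cocycle k t = (\<Prod>j<k. A ((\<tau> ^^ j) t))"

definition neumann_term :: "('a \<Rightarrow> real) \<Rightarrow> nat \<Rightarrow> 'a \<Rightarrow> real" where
  "neumann_term c k t = cocycle k t * c ((\<tau> ^^ k) t)"

definition \<sigma> :: real where
  "\<sigma> = (1 + L) / 2"

(* With L < sigma < 1, each term of the majorant has integral sigma^(kq) times that of |c|^q,
   while the Neumann terms are still bounded by (L / sigma)^k times the q-th root of the majorant. *)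
definition orbit_majorant :: "real \<Rightarrow> ('a \<Rightarrow> real) \<Rightarrow> 'a \<Rightarrow> ennreal" where
  "orbit_majorant q c t = (\<Sum>k. ennreal ((\<sigma> ^ k * \<bar>c ((\<tau> ^^ k) t)\<bar>) powr q))"

definition neumann_sum :: "real \<Rightarrow> ('a \<Rightarrow> real) \<Rightarrow> 'a \<Rightarrow> real" where
  "neumann_sum q c t = (if orbit_majorant q c t < \<infinity> then \<Sum>k. neumann_term c k t else 0)"

lemma \<sigma>_bounds: "L < \<sigma>" "0 < \<sigma>" "\<sigma> < 1"
  using L_nonneg L_less_1 by (auto simp: \<sigma>_def)

lemma abs_cocycle_le: "\<bar>cocycle k t\<bar> \<le> L ^ k"
  unfolding cocycle_def abs_prod
  by (rule order.trans[OF prod_mono[of _ _ "\<lambda>_. L"]]) (auto intro: abs_weight_le)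

lemma cocycle_Suc: "cocycle (Suc k) t = A t * cocycle k (\<tau> t)"
  unfolding cocycle_def prod.lessThan_Suc_shift by (simp add: funpow_Suc_right del: funpow.simps)

lemma neumann_term_0: "neumann_term c 0 t = c t"
  by (simp add: neumann_term_def cocycle_def)

lemma neumann_term_Suc: "neumann_term c (Suc k) t = A t * neumann_term c k (\<tau> t)"
  by (simp add: neumann_term_def cocycle_Suc funpow_Suc_right del: funpow.simps)

lemma measurable_neumann_term [measurable]:
  assumes [measurable]: "c \<in> borel_measurable M"
  shows "neumann_term c k \<in> borel_measurable M"
  unfolding neumann_term_def cocycle_def by measurable

lemma measurable_orbit_majorant [measurable]:
  assumes [measurable]: "c \<in> borel_measurable M"
  shows "orbit_majorant q c \<in> borel_measurable M"
  unfolding orbit_majorant_def by measurable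

lemma abs_neumann_term_le: "\<bar>neumann_term c k t\<bar> \<le> L ^ k * \<bar>c ((\<tau> ^^ k) t)\<bar>"
  unfolding neumann_term_def abs_mult by (rule mult_right_mono[OF abs_cocycle_le]) simp

lemma abs_neumann_term_le_majorant:
  assumes q: "0 < q" and fin: "orbit_majorant q c t < \<infinity>"
  shows "\<bar>neumann_term c k t\<bar> \<le> (L / \<sigma>) ^ k * enn2real (orbit_majorant q c t) powr (1 / q)"
proof -
  define z where "z = enn2real (orbit_majorant q c t)"
  have "(\<Sum>j\<in>{k}. ennreal ((\<sigma> ^ j * \<bar>c ((\<tau> ^^ j) t)\<bar>) powr q)) \<le> orbit_majorant q c t"
    unfolding orbit_majorant_def by (rule sum_le_suminf[OF summableI]) auto
  then have "enn2real (ennreal ((\<sigma> ^ k * \<bar>c ((\<tau> ^^ k) t)\<bar>) powr q)) \<le> z"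
    unfolding z_def using fin by (intro enn2real_mono) simp_all
  then have "(\<sigma> ^ k * \<bar>c ((\<tau> ^^ k) t)\<bar>) powr q \<le> z"
    by simp
  then have "((\<sigma> ^ k * \<bar>c ((\<tau> ^^ k) t)\<bar>) powr q) powr (1 / q) \<le> z powr (1 / q)"
    using q by (intro powr_mono2) auto
  moreover have "0 \<le> \<sigma> ^ k * \<bar>c ((\<tau> ^^ k) t)\<bar>" using \<sigma>_bounds by simp
  ultimately have orbit: "\<sigma> ^ k * \<bar>c ((\<tau> ^^ k) t)\<bar> \<le> z powr (1 / q)"
    using q by (simp add: powr_powr)
  have "\<bar>neumann_term c k t\<bar> \<le> (L / \<sigma>) ^ k * (\<sigma> ^ k * \<bar>c ((\<tau> ^^ k) t)\<bar>)"
    using abs_neumann_term_le[of c k t] \<sigma>_bounds by (simp add: power_divide)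
  also have "\<dots> \<le> (L / \<sigma>) ^ k * z powr (1 / q)"
    using orbit L_nonneg \<sigma>_bounds by (intro mult_left_mono) auto
  finally show ?thesis by (simp add: z_def)
qed


lemma abs_neumann_term_sums_le:
  assumes q: "0 < q" and fin: "orbit_majorant q c t < \<infinity>"
  shows "summable (\<lambda>k. \<bar>neumann_term c k t\<bar>)"
    and "(\<Sum>k. \<bar>neumann_term c k t\<bar>) \<le> enn2real (orbit_majorant q c t) powr (1 / q) / (1 - L / \<sigma>)"
proof -
  define B where "B = enn2real (orbit_majorant q c t) powr (1 / q)"
  have r: "0 \<le> L / \<sigma>" "L / \<sigma> < 1" using L_nonneg \<sigma>_bounds by auto
  have geom: "(\<lambda>k. (L / \<sigma>) ^ k * B) sums (B / (1 - L / \<sigma>))"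
    using sums_mult2[OF geometric_sums[of "L / \<sigma>"], of B] r by (simp add: field_simps)
  have le: "\<bar>neumann_term c k t\<bar> \<le> (L / \<sigma>) ^ k * B" for k
    unfolding B_def by (rule abs_neumann_term_le_majorant[OF q fin])
  show s: "summable (\<lambda>k. \<bar>neumann_term c k t\<bar>)"
    by (rule summable_comparison_test'[OF sums_summable[OF geom], of 0]) (use le in simp)
  show "(\<Sum>k. \<bar>neumann_term c k t\<bar>) \<le> enn2real (orbit_majorant q c t) powr (1 / q) / (1 - L / \<sigma>)"
    using suminf_le[OF le s sums_summable[OF geom]] sums_unique[OF geom] by (simp add: B_def)
qed

lemma abs_neumann_sum_le:
  assumes q: "0 < q"
  shows "\<bar>neumann_sum q c t\<bar> \<le> enn2real (orbit_majorant q c t) powr (1 / q) / (1 - L / \<sigma>)"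
proof (cases "orbit_majorant q c t < \<infinity>")
  case True
  note s = abs_neumann_term_sums_le[OF q True]
  have "\<bar>neumann_sum q c t\<bar> \<le> (\<Sum>k. \<bar>neumann_term c k t\<bar>)"
    using True summable_rabs[OF s(1)] by (simp add: neumann_sum_def)
  then show ?thesis using s(2) by linarith
next
  case False
  then show ?thesis using L_nonneg \<sigma>_bounds by (simp add: neumann_sum_def)
qed

lemma neumann_sum_eq:
  assumes q: "0 < q" and fin: "orbit_majorant q c t < \<infinity>" "orbit_majorant q c (\<tau> t) < \<infinity>"
  shows "neumann_sum q c t = c t + A t * neumann_sum q c (\<tau> t)"
proof -
  have s: "summable (\<lambda>k. neumann_term c k t)" "summable (\<lambda>k. neumann_term c k (\<tau> t))"
    using abs_neumann_term_sums_le(1)[OF q fin(1)] abs_neumann_term_sums_le(1)[OF q fin(2)]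
    by (auto intro: summable_rabs_cancel)
  have "(\<Sum>k. neumann_term c k t) = neumann_term c 0 t + (\<Sum>k. neumann_term c (Suc k) t)"
    using suminf_split_head[OF s(1)] by simp
  also have "\<dots> = c t + A t * (\<Sum>k. neumann_term c k (\<tau> t))"
    using suminf_mult[OF s(2)] by (simp add: neumann_term_0 neumann_term_Suc)
  finally show ?thesis using fin by (simp add: neumann_sum_def)
qed

lemma measurable_neumann_sum:
  assumes q: "0 < q" and [measurable]: "c \<in> borel_measurable M"
  shows "neumann_sum q c \<in> borel_measurable M"
proof (rule borel_measurable_LIMSEQ_real)
  show "(\<lambda>n. if orbit_majorant q c t < \<infinity> then \<Sum>k<n. neumann_term c k t else 0) \<longlonglongrightarrow> neumann_sum q c t"
    for t
    using abs_neumann_term_sums_le(1)[OF q, of c t]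
    by (auto simp: neumann_sum_def intro: summable_LIMSEQ summable_rabs_cancel)
qed measurable

lemma nn_integral_orbit_majorant:
  assumes q: "0 < q" and [measurable]: "c \<in> borel_measurable M"
  shows "(\<integral>\<^sup>+t. orbit_majorant q c t \<partial>M) = ennreal (1 / (1 - \<sigma> powr q)) * (\<integral>\<^sup>+t. ennreal (\<bar>c t\<bar> powr q) \<partial>M)"
proof -
  have \<rho>: "0 < \<sigma> powr q" "\<sigma> powr q < 1" using q \<sigma>_bounds by (simp_all add: powr01_less_one)
  have weight: "(\<sigma> ^ k * \<bar>c s\<bar>) powr q = (\<sigma> powr q) ^ k * \<bar>c s\<bar> powr q" for k s
    using \<sigma>_bounds by (simp add: powr_mult powr_realpow[symmetric] powr_powr mult.commute)
  have "(\<integral>\<^sup>+t. orbit_majorant q c t \<partial>M)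
      = (\<Sum>k. \<integral>\<^sup>+t. ennreal ((\<sigma> powr q) ^ k) * ennreal (\<bar>c ((\<tau> ^^ k) t)\<bar> powr q) \<partial>M)"
    unfolding orbit_majorant_def weight using \<rho>
    by (subst nn_integral_suminf) (simp_all add: ennreal_mult)
  also have "\<dots> = (\<Sum>k. ennreal ((\<sigma> powr q) ^ k) * (\<integral>\<^sup>+t. ennreal (\<bar>c t\<bar> powr q) \<partial>M))"
    by (simp add: nn_integral_cmult nn_integral_comp_funpow[of "\<lambda>s. ennreal (\<bar>c s\<bar> powr q)"])
  also have "\<dots> = ennreal (\<Sum>k. (\<sigma> powr q) ^ k) * (\<integral>\<^sup>+t. ennreal (\<bar>c t\<bar> powr q) \<partial>M)"
    using \<rho> by (simp add: ennreal_suminf_multc suminf_ennreal2 summable_geometric)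
  finally show ?thesis using \<rho> by (simp add: suminf_geometric)
qed


lemma AE_neumann_sum_fixed_point:
  assumes q: "0 < q" and fin: "AE t in M. orbit_majorant q c t < \<infinity>"
  shows "AE t in M. neumann_sum q c t = c t + A t * neumann_sum q c (\<tau> t)"
  using fin AE_comp[OF fin] by eventually_elim (rule neumann_sum_eq[OF q])

lemma neumann_sum_Lq_solution:
  assumes q: "0 < q" and [measurable]: "c \<in> borel_measurable M"
    and fin: "(\<integral>\<^sup>+t. ennreal (\<bar>c t\<bar> powr q) \<partial>M) < \<infinity>"
  shows "integrable M (\<lambda>t. \<bar>neumann_sum q c t\<bar> powr q)"
    and "AE t in M. neumann_sum q c t = c t + A t * neumann_sum q c (\<tau> t)"
proof -
  have [measurable]: "neumann_sum q c \<in> borel_measurable M" by (rule measurable_neumann_sum[OF q]) measurable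
  define C where "C = 1 / (1 - L / \<sigma>) powr q"
  have r: "0 < 1 - L / \<sigma>" using \<sigma>_bounds by simp
  have "(\<integral>\<^sup>+t. orbit_majorant q c t \<partial>M) < \<infinity>"
    using fin by (simp add: nn_integral_orbit_majorant[OF q] ennreal_mult_less_top)
  then have "AE t in M. orbit_majorant q c t \<noteq> \<infinity>"
    by (intro nn_integral_PInf_AE) auto
  then show "AE t in M. neumann_sum q c t = c t + A t * neumann_sum q c (\<tau> t)"
    by (intro AE_neumann_sum_fixed_point[OF q]) (simp add: less_top[symmetric])
  have pointwise: "\<bar>neumann_sum q c t\<bar> powr q \<le> C * enn2real (orbit_majorant q c t)" for t
  proof -
    have "\<bar>neumann_sum q c t\<bar> powr q \<le> (enn2real (orbit_majorant q c t) powr (1 / q) / (1 - L / \<sigma>)) powr q"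
      using abs_neumann_sum_le[OF q, of c t] q by (intro powr_mono2) auto
    also have "\<dots> = C * enn2real (orbit_majorant q c t)"
      using q r by (simp add: C_def powr_divide powr_powr)
    finally show ?thesis .
  qed
  have "(\<integral>\<^sup>+t. ennreal (\<bar>neumann_sum q c t\<bar> powr q) \<partial>M) \<le> (\<integral>\<^sup>+t. ennreal C * orbit_majorant q c t \<partial>M)"
  proof (rule nn_integral_mono)
    fix t
    have "ennreal (\<bar>neumann_sum q c t\<bar> powr q) \<le> ennreal C * ennreal (enn2real (orbit_majorant q c t))"
      using pointwise[of t] by (simp add: C_def ennreal_mult[symmetric] ennreal_leI)
    also have "\<dots> \<le> ennreal C * orbit_majorant q c t"
      by (intro mult_left_mono) (auto simp: ennreal_enn2real_if)
    finally show "ennreal (\<bar>neumann_sum q c t\<bar> powr q) \<le> ennreal C * orbit_majorant q c t" .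
  qed
  also have "\<dots> < \<infinity>"
    using \<open>(\<integral>\<^sup>+t. orbit_majorant q c t \<partial>M) < \<infinity>\<close>
    by (simp add: nn_integral_cmult ennreal_mult_less_top)
  finally show "integrable M (\<lambda>t. \<bar>neumann_sum q c t\<bar> powr q)"
    using q by (simp add: integrable_iff_bounded)
qed

lemma neumann_sum_bounded_solution:
  assumes K: "0 \<le> K" and bound: "AE t in M. \<bar>c t\<bar> \<le> K"
  shows "AE t in M. \<bar>neumann_sum 1 c t\<bar> \<le> K / (1 - L)"
    and "AE t in M. neumann_sum 1 c t = c t + A t * neumann_sum 1 c (\<tau> t)"
proof -
  have orbit: "AE t in M. \<forall>k. \<bar>c ((\<tau> ^^ k) t)\<bar> \<le> K"
    unfolding AE_all_countable using AE_comp_funpow[OF bound] by blast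
  have geom: "(\<lambda>k. L ^ k * K) sums (K / (1 - L))"
    using sums_mult2[OF geometric_sums[of L], of K] L_nonneg L_less_1 by (simp add: field_simps)
  have fin: "orbit_majorant 1 c t < \<infinity>" if "\<forall>k. \<bar>c ((\<tau> ^^ k) t)\<bar> \<le> K" for t
  proof -
    have "orbit_majorant 1 c t \<le> (\<Sum>k. ennreal (\<sigma> ^ k * K))"
      unfolding orbit_majorant_def using that \<sigma>_bounds
      by (intro suminf_le) (auto intro!: ennreal_leI mult_left_mono)
    also have "\<dots> = ennreal (\<Sum>k. \<sigma> ^ k * K)"
      using \<sigma>_bounds K by (intro suminf_ennreal2 summable_mult2 summable_geometric) auto
    finally show ?thesis by (simp add: le_less_trans)
  qed
  show "AE t in M. neumann_sum 1 c t = c t + A t * neumann_sum 1 c (\<tau> t)"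
    by (rule AE_neumann_sum_fixed_point[OF zero_less_one eventually_mono[OF orbit fin]])
  show "AE t in M. \<bar>neumann_sum 1 c t\<bar> \<le> K / (1 - L)"
    using orbit
  proof eventually_elim
    case (elim t)
    have le: "\<bar>neumann_term c k t\<bar> \<le> L ^ k * K" for k
      using abs_neumann_term_le[of c k t] elim L_nonneg by (meson mult_left_mono order.trans zero_le_power)
    have s: "summable (\<lambda>k. \<bar>neumann_term c k t\<bar>)"
      using abs_neumann_term_sums_le(1)[OF _ fin[OF elim]] by simp
    have "\<bar>neumann_sum 1 c t\<bar> \<le> (\<Sum>k. \<bar>neumann_term c k t\<bar>)"
      using fin[OF elim] summable_rabs[OF s] by (simp add: neumann_sum_def)
    also have "\<dots> \<le> K / (1 - L)"
      using suminf_le[OF le s sums_summable[OF geom]] sums_unique[OF geom] by simp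
    finally show ?case .
  qed
qed

end

locale interval_partition =
  fixes x :: "nat \<Rightarrow> real" and N :: nat
  assumes N_pos: "0 < N" and strict_mono: "strict_mono_on {0..N} x"
begin

abbreviation I :: "real set" where "I \<equiv> Ival x N"

abbreviation M :: "real measure" where "M \<equiv> lebesgue_on I"

lemma x_less: "i < j \<Longrightarrow> j \<le> N \<Longrightarrow> x i < x j"
  using strict_mono by (auto simp: strict_mono_on_def)

lemma x_le: "i \<le> j \<Longrightarrow> j \<le> N \<Longrightarrow> x i \<le> x j"
  using x_less by (cases "i = j") (auto simp: order.strict_implies_order)

lemma x0_less_xN: "x 0 < x N"
  using x_less N_pos by auto

lemma x_pred_less: "n \<in> {1..N} \<Longrightarrow> x (n - 1) < x n"
  using x_less by auto

lemma Iseg_bounds: "t \<in> Iseg x n \<Longrightarrow> x (n - 1) \<le> t \<and> t \<le> x n"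
  by (auto simp: Iseg_def split: if_splits)

lemma Iseg_subset:
  assumes "n \<in> {1..N}"
  shows "Iseg x n \<subseteq> I"
proof -
  have "x 0 \<le> x (n - 1)" "x n \<le> x N" using assms by (auto intro: x_le)
  then show ?thesis by (auto simp: Ival_def dest!: Iseg_bounds)
qed

lemma Iseg_unique:
  assumes "n \<in> {1..N}" "m \<in> {1..N}" "t \<in> Iseg x n" "t \<in> Iseg x m"
  shows "n = m"
proof -
  have "False" if "n < m" "n \<in> {1..N}" "m \<in> {1..N}" "t \<in> Iseg x n" "t \<in> Iseg x m" for n m
  proof -
    have "t \<le> x n" using that Iseg_bounds by blast
    also have "x n \<le> x (m - 1)" using that by (auto intro: x_le)
    also have "x (m - 1) < t" using that by (auto simp: Iseg_def split: if_splits)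
    finally show False by simp
  qed
  then show ?thesis using assms by (metis linorder_neqE_nat)
qed

lemma Iseg_cover:
  assumes t: "t \<in> I"
  obtains n where "n \<in> {1..N}" "t \<in> Iseg x n"
proof (cases "t \<le> x 1")
  case True
  then show ?thesis using t N_pos that[of 1] by (auto simp: Iseg_def Ival_def)
next
  case False
  define n where "n = (LEAST m. t \<le> x m)"
  have tN: "t \<le> x N" using t by (auto simp: Ival_def)
  have n: "t \<le> x n" "n \<le> N" unfolding n_def by (auto intro: LeastI Least_le tN)
  have "\<not> t \<le> x (n - 1)" if "n \<noteq> 0"
    using Least_le[of "\<lambda>m. t \<le> x m" "n - 1"] that by (auto simp: n_def[symmetric])
  moreover have "n \<noteq> 0" "n \<noteq> 1" using n(1) False x_le[of 0 1] N_pos by (cases "n = 0"; auto)+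
  ultimately show ?thesis using n that[of n] by (auto simp: Iseg_def)
qed

lemma Linv_in_Ival:
  assumes n: "n \<in> {1..N}" and t: "t \<in> Iseg x n"
  shows "Linv x N n t \<in> I"
proof -
  define k where "k = (t - x (n - 1)) / (x n - x (n - 1))"
  have k: "0 \<le> k" "k \<le> 1" using Iseg_bounds[OF t] x_pred_less[OF n] by (auto simp: k_def divide_simps)
  have "Linv x N n t = x 0 + (x N - x 0) * k" unfolding Linv_def k_def by simp
  moreover have "(x N - x 0) * k \<le> x N - x 0" using k x0_less_xN by (simp add: mult_left_le)
  moreover have "0 \<le> (x N - x 0) * k" using k x0_less_xN by simp
  ultimately show ?thesis unfolding Ival_def by simp
qed

lemma sum_Iseg_select:
  fixes g :: "nat \<Rightarrow> 'a::comm_monoid_add"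
  assumes "n \<in> {1..N}" "t \<in> Iseg x n"
  shows "(\<Sum>m\<in>{1..N}. if t \<in> Iseg x m then g m else 0) = g n"
proof -
  have "(\<Sum>m\<in>{1..N}. if t \<in> Iseg x m then g m else 0) = (\<Sum>m\<in>{1..N}. if m = n then g m else 0)"
  proof (rule sum.cong)
    fix m assume "m \<in> {1..N}"
    then have "t \<in> Iseg x m \<longleftrightarrow> m = n" using Iseg_unique[OF _ assms(1) _ assms(2)] assms(2) by blast
    then show "(if t \<in> Iseg x m then g m else 0) = (if m = n then g m else 0)" by simp
  qed simp
  then show ?thesis using assms(1) by simp
qed

definition tau :: "real \<Rightarrow> real" where
  "tau t = (\<Sum>n\<in>{1..N}. if t \<in> Iseg x n then Linv x N n t else 0)"

lemma tau_eq: "n \<in> {1..N} \<Longrightarrow> t \<in> Iseg x n \<Longrightarrow> tau t = Linv x N n t"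
  unfolding tau_def by (rule sum_Iseg_select)

lemma tau_in_Ival: "t \<in> I \<Longrightarrow> tau t \<in> I"
  by (elim Iseg_cover) (simp add: tau_eq Linv_in_Ival)

lemma Iseg_sets [measurable]: "Iseg x n \<in> sets lebesgue"
  unfolding Iseg_def by simp

lemma Ival_sets [measurable]: "I \<in> sets lebesgue"
  unfolding Ival_def by simp

lemma Linv_measurable:
  assumes n: "n \<in> {1..N}"
  shows "Linv x N n \<in> lebesgue \<rightarrow>\<^sub>M lebesgue"
proof -
  define c where "c = (x N - x 0) / (x n - x (n - 1))"
  have "c \<noteq> 0" using x0_less_xN x_pred_less[OF n] by (simp add: c_def)
  moreover have "Linv x N n = (\<lambda>t. (x 0 - c * x (n - 1)) + c * t)"
    by (rule ext) (simp add: Linv_def c_def right_diff_distrib)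
  ultimately show ?thesis
    using lebesgue_affine_measurable[where c="\<lambda>_::real. c" and t="x 0 - c * x (n - 1)"] by simp
qed

lemma tau_measurable: "tau \<in> M \<rightarrow>\<^sub>M M"
proof (rule measurableI)
  show "t \<in> space M \<Longrightarrow> tau t \<in> space M" for t using tau_in_Ival by simp
  fix A assume "A \<in> sets M"
  then have A: "A \<in> sets lebesgue" using sets_restrict_space_iff[of I lebesgue A] by auto
  have "tau -` A \<inter> space M = (\<Union>n\<in>{1..N}. Iseg x n \<inter> Linv x N n -` A)"
  proof (intro set_eqI iffI)
    fix t assume "t \<in> tau -` A \<inter> space M"
    then show "t \<in> (\<Union>n\<in>{1..N}. Iseg x n \<inter> Linv x N n -` A)"
      by (auto elim!: Iseg_cover simp: tau_eq)
  next
    fix t assume "t \<in> (\<Union>n\<in>{1..N}. Iseg x n \<inter> Linv x N n -` A)"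
    then obtain n where n: "n \<in> {1..N}" "t \<in> Iseg x n" "Linv x N n t \<in> A" by auto
    then show "t \<in> tau -` A \<inter> space M" using Iseg_subset[OF n(1)] tau_eq[OF n(1,2)] by auto
  qed
  moreover have "Iseg x n \<inter> Linv x N n -` A \<in> sets lebesgue" if "n \<in> {1..N}" for n
    using measurable_sets[OF Linv_measurable[OF that] A] by simp
  moreover have "(\<Union>n\<in>{1..N}. Iseg x n \<inter> Linv x N n -` A) \<subseteq> I" using Iseg_subset by blast
  ultimately show "tau -` A \<inter> space M \<in> sets M"
    by (simp add: sets_restrict_space_iff sets.finite_UN)
qed

lemma nn_integral_Iseg_Linv:
  fixes g :: "real \<Rightarrow> ennreal"
  assumes n: "n \<in> {1..N}" and [measurable]: "g \<in> borel_measurable lebesgue"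
  shows "(\<integral>\<^sup>+t. g (Linv x N n t) * indicator (Iseg x n) t \<partial>lebesgue)
           = ennreal ((x n - x (n - 1)) / (x N - x 0)) * (\<integral>\<^sup>+s. g s * indicator I s \<partial>lebesgue)"
proof -
  define c where "c = (x n - x (n - 1)) / (x N - x 0)"
  define t0 where "t0 = x (n - 1) - c * x 0"
  have c: "0 < c" using x_pred_less[OF n] x0_less_xN by (simp add: c_def)
  have [measurable]: "Linv x N n \<in> lebesgue \<rightarrow>\<^sub>M lebesgue" by (rule Linv_measurable[OF n])
  have L: "t0 + c * s = x (n - 1) + c * (s - x 0)" for s by (simp add: t0_def algebra_simps)
  have Linv_L: "Linv x N n (t0 + c * s) = s" for s
  proof -
    have inverse: "(x N - x 0) / (x n - x (n - 1)) * c = 1"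
      using x0_less_xN x_pred_less[OF n] by (simp add: c_def)
    have "Linv x N n (t0 + c * s) = x 0 + ((x N - x 0) / (x n - x (n - 1)) * c) * (s - x 0)"
      unfolding Linv_def L by simp
    then show ?thesis unfolding inverse by simp
  qed
  have Iseg_L: "t0 + c * s \<in> Iseg x n \<longleftrightarrow> s \<in> I" if "s \<noteq> x 0" for s
  proof -
    have "t0 + c * s \<noteq> x (n - 1)" using that c by (simp add: L)
    then have "t0 + c * s \<in> Iseg x n \<longleftrightarrow> x (n - 1) \<le> t0 + c * s \<and> t0 + c * s \<le> x n"
      by (auto simp: Iseg_def)
    also have "\<dots> \<longleftrightarrow> 0 \<le> c * (s - x 0) \<and> c * (s - x 0) \<le> c * (x N - x 0)"
    proof -
      have "c * (x N - x 0) = x n - x (n - 1)" using x0_less_xN by (simp add: c_def)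
      then show ?thesis unfolding L by linarith
    qed
    also have "\<dots> \<longleftrightarrow> s \<in> I" using c by (simp add: Ival_def zero_le_mult_iff)
    finally show ?thesis .
  qed
  have "(\<integral>\<^sup>+t. g (Linv x N n t) * indicator (Iseg x n) t \<partial>lebesgue)
      = ennreal c * (\<integral>\<^sup>+s. g (Linv x N n (t0 + c * s)) * indicator (Iseg x n) (t0 + c * s) \<partial>lebesgue)"
    using c by (subst nn_integral_real_affine_lebesgue[where c = c and t = t0]) auto
  also have "(\<integral>\<^sup>+s. g (Linv x N n (t0 + c * s)) * indicator (Iseg x n) (t0 + c * s) \<partial>lebesgue)
      = (\<integral>\<^sup>+s. g s * indicator I s \<partial>lebesgue)"
  proof (rule nn_integral_cong_AE)
    show "AE s in lebesgue. g (Linv x N n (t0 + c * s)) * indicator (Iseg x n) (t0 + c * s) = g s * indicator I s"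
      using AE_completion[OF AE_lborel_singleton[of "x 0"]]
      by eventually_elim (simp add: Linv_L Iseg_L indicator_def)
  qed
  finally show ?thesis by (simp add: c_def)
qed

lemma nn_integral_tau:
  fixes g :: "real \<Rightarrow> ennreal"
  assumes g: "g \<in> borel_measurable M"
  shows "(\<integral>\<^sup>+t. g (tau t) \<partial>M) = (\<integral>\<^sup>+t. g t \<partial>M)"
proof -
  define d where "d n = (x n - x (n - 1)) / (x N - x 0)" for n
  have d: "0 \<le> d n" if "n \<in> {1..N}" for n using x_pred_less[OF that] x0_less_xN by (simp add: d_def)
  have [measurable]: "(\<lambda>s. g s * indicator I s) \<in> borel_measurable lebesgue"
    using g borel_measurable_restrict_space_iff_ennreal[of I lebesgue g] by simp
  have [measurable]: "Linv x N n \<in> lebesgue \<rightarrow>\<^sub>M lebesgue" if "n \<in> {1..N}" for n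
    by (rule Linv_measurable[OF that])
  have pieces: "g (tau t) * indicator I t
      = (\<Sum>n\<in>{1..N}. (g (Linv x N n t) * indicator I (Linv x N n t)) * indicator (Iseg x n) t)" for t
  proof (cases "t \<in> I")
    case True
    then obtain n where n: "n \<in> {1..N}" "t \<in> Iseg x n" by (rule Iseg_cover)
    have "(\<Sum>m\<in>{1..N}. (g (Linv x N m t) * indicator I (Linv x N m t)) * indicator (Iseg x m) t)
        = (\<Sum>m\<in>{1..N}. if t \<in> Iseg x m then g (Linv x N m t) * indicator I (Linv x N m t) else 0)"
      by (intro sum.cong) (auto simp: indicator_def)
    also have "\<dots> = g (Linv x N n t) * indicator I (Linv x N n t)" by (rule sum_Iseg_select[OF n])
    also have "\<dots> = g (tau t)" using Linv_in_Ival[OF n] by (simp add: tau_eq[OF n])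
    finally show ?thesis using True by simp
  next
    case False
    then have "t \<notin> Iseg x n" if "n \<in> {1..N}" for n using Iseg_subset[OF that] by blast
    then show ?thesis using False by simp
  qed
  have "(\<integral>\<^sup>+t. g (tau t) \<partial>M) = (\<integral>\<^sup>+t. g (tau t) * indicator I t \<partial>lebesgue)"
    by (simp add: nn_integral_restrict_space)
  also have "\<dots> = (\<Sum>n\<in>{1..N}.
      \<integral>\<^sup>+t. (g (Linv x N n t) * indicator I (Linv x N n t)) * indicator (Iseg x n) t \<partial>lebesgue)"
    unfolding pieces by (intro nn_integral_sum) auto
  also have "\<dots> = (\<Sum>n\<in>{1..N}. ennreal (d n) * (\<integral>\<^sup>+s. g s * indicator I s \<partial>lebesgue))"
  proof (intro sum.cong refl)
    fix n assume "n \<in> {1..N}"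
    moreover have "g s * indicator I s * indicator I s = g s * indicator I s" for s
      by (simp add: indicator_def)
    ultimately show "(\<integral>\<^sup>+t. (g (Linv x N n t) * indicator I (Linv x N n t)) * indicator (Iseg x n) t \<partial>lebesgue)
        = ennreal (d n) * (\<integral>\<^sup>+s. g s * indicator I s \<partial>lebesgue)"
      by (simp add: nn_integral_Iseg_Linv[where g = "\<lambda>s. g s * indicator I s"] d_def)
  qed
  also have "\<dots> = ennreal (\<Sum>n\<in>{1..N}. d n) * (\<integral>\<^sup>+t. g t \<partial>M)"
    using sum_ennreal[of "{1..N}" d, OF d]
    by (simp add: sum_distrib_right[symmetric] nn_integral_restrict_space)
  also have "(\<Sum>n\<in>{1..N}. d n) = 1"
  proof -
    have "(\<Sum>n\<in>{1..K}. x n - x (n - 1)) = x K - x 0" for K by (induction K) (auto simp: sum.cl_ivl_Suc)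
    then show ?thesis using x0_less_xN by (simp add: d_def sum_divide_distrib[symmetric])
  qed
  finally show ?thesis by simp
qed

sublocale measure_preserving M tau
proof
  show "tau \<in> M \<rightarrow>\<^sub>M M" by (rule tau_measurable)
  show "distr M M tau = M"
  proof (rule measure_eqI)
    fix A assume A: "A \<in> sets (distr M M tau)"
    then have "emeasure (distr M M tau) A = (\<integral>\<^sup>+t. indicator A (tau t) \<partial>M)"
      using nn_integral_distr[OF tau_measurable, of "indicator A"] by simp
    also have "\<dots> = emeasure M A" using A by (simp add: nn_integral_tau)
    finally show "emeasure (distr M M tau) A = emeasure M A" .
  qed simp
qed

lemma emeasure_space_M: "emeasure M (space M) = ennreal (x N - x 0)"
  using x0_less_xN by (simp add: emeasure_restrict_space Ival_def)

end

lemma memLp_diff: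
  assumes p: "0 < p" and g: "memLp I p g" and g': "memLp I p g'"
  shows "memLp I p (\<lambda>t. g t - g' t)"
proof -
  have [measurable]: "g \<in> borel_measurable (lebesgue_on I)" "g' \<in> borel_measurable (lebesgue_on I)"
    using g g' by (simp_all add: memLp_def)
  show ?thesis
  proof (cases "p = \<infinity>")
    case True
    have "esssup (lebesgue_on I) (\<lambda>t. ereal \<bar>g t - g' t\<bar>) \<le> esssup (lebesgue_on I) (\<lambda>t. ereal \<bar>g t\<bar> + ereal \<bar>g' t\<bar>)"
      by (rule esssup_mono) auto
    also have "\<dots> \<le> esssup (lebesgue_on I) (\<lambda>t. ereal \<bar>g t\<bar>) + esssup (lebesgue_on I) (\<lambda>t. ereal \<bar>g' t\<bar>)"
      by (rule esssup_add)
    also have "\<dots> < \<infinity>" using g g' True by (simp add: memLp_def)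
    finally show ?thesis using True by (simp add: memLp_def)
  next
    case False
    then have "0 < enn2real p" using p by (simp add: enn2real_positive_iff less_top)
    then show ?thesis using g g' False
      by (auto simp: memLp_def intro: integrable_powr_dominated[where u = g and v = g'])
  qed
qed

locale fractal_convolution = interval_partition +
  fixes \<alpha> :: "nat \<Rightarrow> real \<Rightarrow> real"
  assumes measurable_\<alpha>: "\<And>n. n \<in> {1..N} \<Longrightarrow> \<alpha> n \<in> borel_measurable M"
    and Lam_less_1: "Lam x N \<alpha> < 1"
begin

definition \<Lambda> :: real where
  "\<Lambda> = real_of_ereal (Lam x N \<alpha>)"

lemma Lam_eq: "Lam x N \<alpha> = ereal \<Lambda>" and \<Lambda>_nonneg: "0 \<le> \<Lambda>" and \<Lambda>_less_1: "\<Lambda> < 1"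
proof -
  have "esssup M (\<lambda>t. 0::ereal) \<le> Lam x N \<alpha>"
    unfolding Lam_def
  proof (rule esssup_mono)
    have "ereal \<bar>\<alpha> 1 t\<bar> \<le> Max ((\<lambda>n. ereal \<bar>\<alpha> n t\<bar>) ` {1..N})" for t
      using N_pos by (intro Max_ge) auto
    then show "0 \<le> Max ((\<lambda>n. ereal \<bar>\<alpha> n t\<bar>) ` {1..N})" for t by (rule order.trans[rotated]) simp
  qed simp
  then have "0 \<le> Lam x N \<alpha>" using esssup_const[of M "0::ereal"] emeasure_space_M x0_less_xN by simp
  then show "Lam x N \<alpha> = ereal \<Lambda>" "0 \<le> \<Lambda>" "\<Lambda> < 1"
    using Lam_less_1 unfolding \<Lambda>_def by (cases "Lam x N \<alpha>"; simp)+
qed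

lemma AE_abs_\<alpha>_le: "AE t in M. \<forall>n\<in>{1..N}. \<bar>\<alpha> n t\<bar> \<le> \<Lambda>"
  using esssup_AE[of "\<lambda>t. Max ((\<lambda>n. ereal \<bar>\<alpha> n t\<bar>) ` {1..N})" M]
proof eventually_elim
  case (elim t)
  have "ereal \<bar>\<alpha> n t\<bar> \<le> Lam x N \<alpha>" if "n \<in> {1..N}" for n
  proof -
    have "ereal \<bar>\<alpha> n t\<bar> \<le> Max ((\<lambda>n. ereal \<bar>\<alpha> n t\<bar>) ` {1..N})"
      using that by (intro Max_ge) auto
    then show ?thesis using elim unfolding Lam_def by (rule order.trans)
  qed
  then show ?case by (simp add: Lam_eq)
qed

definition \<alpha>_glued :: "real \<Rightarrow> real" where
  "\<alpha>_glued t = (\<Sum>n\<in>{1..N}. if t \<in> Iseg x n then \<alpha> n (Linv x N n t) else 0)"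

lemma \<alpha>_glued_eq:
  assumes "n \<in> {1..N}" "t \<in> Iseg x n"
  shows "\<alpha>_glued t = \<alpha> n (tau t)"
proof -
  have "\<alpha>_glued t = \<alpha> n (Linv x N n t)" unfolding \<alpha>_glued_def by (rule sum_Iseg_select[OF assms])
  then show ?thesis by (simp add: tau_eq[OF assms])
qed

lemma fcT_eq:
  assumes "t \<in> I"
  shows "fcT x N \<alpha> f b g t = f t + \<alpha>_glued t * (g (tau t) - b (tau t))"
proof -
  obtain n where n: "n \<in> {1..N}" "t \<in> Iseg x n" using assms by (rule Iseg_cover)
  have "fcT x N \<alpha> f b g t = f t + \<alpha> n (Linv x N n t) * (g (Linv x N n t) - b (Linv x N n t))"
    unfolding fcT_def by (subst sum_Iseg_select[OF n]) (rule refl)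
  then show ?thesis by (simp add: \<alpha>_glued_eq[OF n] tau_eq[OF n])
qed

lemma AE_abs_\<alpha>_glued_le: "AE t in M. \<bar>\<alpha>_glued t\<bar> \<le> \<Lambda>"
  using AE_comp[OF AE_abs_\<alpha>_le] AE_space
proof eventually_elim
  case (elim t)
  then obtain n where n: "n \<in> {1..N}" "t \<in> Iseg x n" by (auto elim: Iseg_cover)
  then show ?case using elim(1) by (simp add: \<alpha>_glued_eq[OF n])
qed

lemma measurable_\<alpha>_glued [measurable]: "\<alpha>_glued \<in> borel_measurable M"
proof -
  have eq: "\<alpha>_glued t = (\<Sum>n\<in>{1..N}. indicator (Iseg x n) t * \<alpha> n (tau t))" if "t \<in> space M" for t
  proof -
    have "t \<in> I" using that by simp
    then obtain n where n: "n \<in> {1..N}" "t \<in> Iseg x n" by (rule Iseg_cover)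
    have "(\<Sum>m\<in>{1..N}. indicator (Iseg x m) t * \<alpha> m (tau t))
        = (\<Sum>m\<in>{1..N}. if t \<in> Iseg x m then \<alpha> m (tau t) else 0)"
      by (rule sum.cong) (simp_all add: indicator_def)
    also have "\<dots> = \<alpha> n (tau t)" by (rule sum_Iseg_select[OF n])
    also have "\<dots> = \<alpha>_glued t" by (rule \<alpha>_glued_eq[OF n, symmetric])
    finally show ?thesis by (rule sym)
  qed
  have "Iseg x n \<in> sets M" if "n \<in> {1..N}" for n
    using Iseg_subset[OF that] by (simp add: sets_restrict_space_iff)
  then have m: "(\<lambda>t. \<Sum>n\<in>{1..N}. indicator (Iseg x n) t * \<alpha> n (tau t)) \<in> borel_measurable M"
    by (intro borel_measurable_sum borel_measurable_times borel_measurable_indicator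
        measurable_compose[OF tau_measurable measurable_\<alpha>]) auto
  show ?thesis by (rule measurable_cong[THEN iffD2, OF eq m])
qed

(* Truncating on the null set where |alpha_glued| > Lambda yields a weight bounded everywhere. *)
definition weight :: "real \<Rightarrow> real" where
  "weight t = (if \<bar>\<alpha>_glued t\<bar> \<le> \<Lambda> then \<alpha>_glued t else 0)"

lemma AE_weight_eq: "AE t in M. weight t = \<alpha>_glued t"
  using AE_abs_\<alpha>_glued_le by eventually_elim (simp add: weight_def)

sublocale weighted_composition M tau weight \<Lambda>
proof
  show "weight \<in> borel_measurable M" unfolding weight_def by measurable
qed (use \<Lambda>_nonneg \<Lambda>_less_1 in \<open>auto simp: weight_def\<close>)

lemma memLp_source:
  assumes p: "0 < p" and f: "memLp I p f" and b: "memLp I p b"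
  shows "memLp I p (\<lambda>t. f t - weight t * b (tau t))"
proof -
  have [measurable]: "f \<in> borel_measurable M" and b_meas [measurable]: "b \<in> borel_measurable M"
    using f b by (simp_all add: memLp_def)
  have dom: "\<bar>f t - weight t * b (tau t)\<bar> \<le> \<bar>f t\<bar> + \<bar>\<Lambda> * b (tau t)\<bar>" for t
  proof -
    have "\<bar>weight t * b (tau t)\<bar> \<le> \<bar>\<Lambda> * b (tau t)\<bar>"
      using abs_weight_le[of t] \<Lambda>_nonneg by (simp add: abs_mult mult_right_mono)
    then show ?thesis by linarith
  qed
  show ?thesis
  proof (cases "p = \<infinity>")
    case True
    have M: "emeasure M (space M) \<noteq> 0" using emeasure_space_M x0_less_xN by simp
    obtain Kf Kb where Kf: "AE t in M. \<bar>f t\<bar> \<le> Kf" and Kb: "AE t in M. \<bar>b t\<bar> \<le> Kb"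
      using finite_esssup_abs(3)[OF M] f b True unfolding memLp_def by meson
    have "AE t in M. \<bar>f t - weight t * b (tau t)\<bar> \<le> Kf + \<Lambda> * Kb"
      using Kf AE_comp[OF Kb]
    proof eventually_elim
      case (elim t)
      have "\<Lambda> * \<bar>b (tau t)\<bar> \<le> \<Lambda> * Kb" using elim \<Lambda>_nonneg by (intro mult_left_mono) auto
      then show ?case using dom[of t] elim \<Lambda>_nonneg by (simp add: abs_mult)
    qed
    then have "esssup M (\<lambda>t. ereal \<bar>f t - weight t * b (tau t)\<bar>) \<le> ereal (Kf + \<Lambda> * Kb)"
      by (intro esssup_I) (auto elim: eventually_mono)
    then have "esssup M (\<lambda>t. ereal \<bar>f t - weight t * b (tau t)\<bar>) < \<infinity>"
      using le_less_trans by fastforce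
    then show ?thesis using True by (simp add: memLp_def)
  next
    case False
    then have q: "0 < enn2real p" using p by (simp add: enn2real_positive_iff less_top)
    have i_f: "integrable M (\<lambda>t. \<bar>f t\<bar> powr enn2real p)" and i_b: "integrable M (\<lambda>t. \<bar>b t\<bar> powr enn2real p)"
      using f b False by (simp_all add: memLp_def)
    have "(\<lambda>t. f t - weight t * b (tau t)) \<in> borel_measurable M" by measurable
    from integrable_powr_dominated[OF q this i_f norm_powr_scaled_comp(1)[OF q \<Lambda>_nonneg b_meas i_b] AE_I2[OF dom]]
    have "integrable M (\<lambda>t. \<bar>f t - weight t * b (tau t)\<bar> powr enn2real p)" .
    then show ?thesis using False by (simp add: memLp_def)
  qed
qed

lemma exists_Lp_solution:
  assumes p: "0 < p" and c: "memLp I p c"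
  shows "\<exists>h. memLp I p h \<and> (AE t in M. h t = c t + weight t * h (tau t))"
proof -
  have cm [measurable]: "c \<in> borel_measurable M" using c by (simp add: memLp_def)
  show ?thesis
  proof (cases "p = \<infinity>")
    case True
    have M: "emeasure M (space M) \<noteq> 0" using emeasure_space_M x0_less_xN by simp
    have "esssup M (\<lambda>t. ereal \<bar>c t\<bar>) < \<infinity>" using c True by (simp add: memLp_def)
    note K = finite_esssup_abs[OF M this]
    define h where "h = neumann_sum 1 c"
    note h = neumann_sum_bounded_solution[OF K(2,3), folded h_def]
    have [measurable]: "h \<in> borel_measurable M" unfolding h_def by (rule measurable_neumann_sum) measurable
    have "esssup M (\<lambda>t. ereal \<bar>h t\<bar>) \<le> ereal (real_of_ereal (esssup M (\<lambda>t. ereal \<bar>c t\<bar>)) / (1 - \<Lambda>))"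
      using h(1) by (intro esssup_I) (auto elim: eventually_mono)
    then have "esssup M (\<lambda>t. ereal \<bar>h t\<bar>) < \<infinity>" using le_less_trans by fastforce
    then have "memLp I p h" using True by (simp add: memLp_def)
    then show ?thesis using h(2) by blast
  next
    case False
    then have q: "0 < enn2real p" using p by (simp add: enn2real_positive_iff less_top)
    have "integrable M (\<lambda>t. \<bar>c t\<bar> powr enn2real p)" using c False by (simp add: memLp_def)
    from integrableD(2)[OF this] have "(\<integral>\<^sup>+t. ennreal (\<bar>c t\<bar> powr enn2real p) \<partial>M) < \<infinity>"
      by (simp add: less_top[symmetric])
    note h = neumann_sum_Lq_solution[OF q cm this]
    moreover have "neumann_sum (enn2real p) c \<in> borel_measurable M" by (rule measurable_neumann_sum[OF q]) measurable
    ultimately have "memLp I p (neumann_sum (enn2real p) c)" using False by (simp add: memLp_def)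
    then show ?thesis using h(2) by blast
  qed
qed

lemma frac_conv_fixed_point:
  assumes p: "0 < p" and f: "memLp I p f" and b: "memLp I p b"
  shows "memLp I p (frac_conv x N \<alpha> p f b)"
    and "AE t in M. fcT x N \<alpha> f b (frac_conv x N \<alpha> p f b) t = frac_conv x N \<alpha> p f b t"
proof -
  obtain h where h: "memLp I p h" "AE t in M. h t = (f t - weight t * b (tau t)) + weight t * h (tau t)"
    using exists_Lp_solution[OF p memLp_source[OF p f b]] by blast
  have "AE t in M. fcT x N \<alpha> f b h t = h t"
    using h(2) AE_weight_eq AE_space
  proof eventually_elim
    case (elim t)
    then show ?case by (simp add: fcT_eq algebra_simps)
  qed
  with h(1) have "\<exists>h. memLp I p h \<and> (AE t in M. fcT x N \<alpha> f b h t = h t)" by blast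
  from someI_ex[OF this]
  show "memLp I p (frac_conv x N \<alpha> p f b)"
    and "AE t in M. fcT x N \<alpha> f b (frac_conv x N \<alpha> p f b) t = frac_conv x N \<alpha> p f b t"
    unfolding frac_conv_def by blast+
qed

lemma AE_abs_diff_fixed_points_le:
  assumes h: "AE t in M. fcT x N \<alpha> f b h t = h t" and h': "AE t in M. fcT x N \<alpha> f' b' h' t = h' t"
  shows "AE t in M. \<bar>h t - h' t\<bar>
           \<le> \<bar>f t - f' t\<bar> + \<Lambda> * \<bar>h (tau t) - h' (tau t)\<bar> + \<Lambda> * \<bar>b (tau t) - b' (tau t)\<bar>"
  using h h' AE_abs_\<alpha>_glued_le AE_space
proof eventually_elim
  case (elim t)
  then have "h t - h' t = (f t - f' t) + \<alpha>_glued t * ((h (tau t) - h' (tau t)) - (b (tau t) - b' (tau t)))"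
    using fcT_eq[of t f b h] fcT_eq[of t f' b' h'] by (simp add: algebra_simps)
  also have "\<bar>\<dots>\<bar> \<le> \<bar>f t - f' t\<bar> + \<bar>\<alpha>_glued t\<bar> * (\<bar>h (tau t) - h' (tau t)\<bar> + \<bar>b (tau t) - b' (tau t)\<bar>)"
    by (rule order.trans[OF abs_triangle_ineq]) (simp add: abs_mult mult_left_mono abs_triangle_ineq4)
  also have "\<dots> \<le> \<bar>f t - f' t\<bar> + \<Lambda> * (\<bar>h (tau t) - h' (tau t)\<bar> + \<bar>b (tau t) - b' (tau t)\<bar>)"
    using elim(3) by (intro add_left_mono mult_right_mono) auto
  finally show ?case by (simp add: algebra_simps)
qed

lemma frac_conv_diff:
  assumes p: "0 < p" and "memLp I p f" "memLp I p f'" "memLp I p b" "memLp I p b'"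
  defines "h \<equiv> frac_conv x N \<alpha> p f b" and "h' \<equiv> frac_conv x N \<alpha> p f' b'"
  shows "memLp I p (\<lambda>t. h t - h' t)"
    and "AE t in M. \<bar>h t - h' t\<bar>
           \<le> \<bar>f t - f' t\<bar> + \<Lambda> * \<bar>h (tau t) - h' (tau t)\<bar> + \<Lambda> * \<bar>b (tau t) - b' (tau t)\<bar>"
proof -
  note fixed_point = frac_conv_fixed_point[OF p]
  show "memLp I p (\<lambda>t. h t - h' t)"
    unfolding h_def h'_def using fixed_point(1) assms(2-5) by (intro memLp_diff[OF p])
  show "AE t in M. \<bar>h t - h' t\<bar>
      \<le> \<bar>f t - f' t\<bar> + \<Lambda> * \<bar>h (tau t) - h' (tau t)\<bar> + \<Lambda> * \<bar>b (tau t) - b' (tau t)\<bar>"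
    unfolding h_def h'_def using fixed_point(2) assms(2-5) by (intro AE_abs_diff_fixed_points_le)
qed

lemma Lp_norm_frac_conv_diff_le:
  assumes p: "1 \<le> p" and f: "memLp I p f" "memLp I p f'" and b: "memLp I p b" "memLp I p b'"
  defines "h \<equiv> frac_conv x N \<alpha> p f b" and "h' \<equiv> frac_conv x N \<alpha> p f' b'"
  shows "Lp_norm I p (\<lambda>t. h t - h' t)
           \<le> 1 / (1 - \<Lambda>) * (Lp_norm I p (\<lambda>t. f t - f' t) + \<Lambda> * Lp_norm I p (\<lambda>t. b t - b' t))"
proof -
  have p0: "0 < p" by (rule less_le_trans[OF zero_less_one p])
  note diff = frac_conv_diff[OF p0 f b, folded h_def h'_def]
  have "memLp I p (\<lambda>t. h t - h' t)" "memLp I p (\<lambda>t. f t - f' t)" "memLp I p (\<lambda>t. b t - b' t)"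
    using diff(1) memLp_diff[OF p0] f b by simp_all
  then have [measurable]: "(\<lambda>t. h t - h' t) \<in> borel_measurable M" "(\<lambda>t. b t - b' t) \<in> borel_measurable M"
    and D: "p \<noteq> \<infinity> \<Longrightarrow> integrable M (\<lambda>t. \<bar>h t - h' t\<bar> powr enn2real p)"
    and F: "p \<noteq> \<infinity> \<Longrightarrow> integrable M (\<lambda>t. \<bar>f t - f' t\<bar> powr enn2real p)"
    and B: "p \<noteq> \<infinity> \<Longrightarrow> integrable M (\<lambda>t. \<bar>b t - b' t\<bar> powr enn2real p)"
    and D_ess: "p = \<infinity> \<Longrightarrow> esssup M (\<lambda>t. ereal \<bar>h t - h' t\<bar>) < \<infinity>"
    and F_ess: "p = \<infinity> \<Longrightarrow> esssup M (\<lambda>t. ereal \<bar>f t - f' t\<bar>) < \<infinity>"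
    and B_ess: "p = \<infinity> \<Longrightarrow> esssup M (\<lambda>t. ereal \<bar>b t - b' t\<bar>) < \<infinity>"
    by (simp_all add: memLp_def)
  show ?thesis
  proof (cases "p = \<infinity>")
    case True
    have "emeasure M (space M) \<noteq> 0" using emeasure_space_M x0_less_xN by simp
    from esssup_contraction_estimate[OF this \<Lambda>_nonneg \<Lambda>_less_1 _ D_ess F_ess B_ess diff(2)]
    show ?thesis using True unfolding Lp_norm_def by simp
  next
    case False
    then have "1 \<le> enn2real p" using enn2real_mono[OF p] by (simp add: less_top)
    from Lp_contraction_estimate[OF this \<Lambda>_nonneg \<Lambda>_less_1 _ _ D F B diff(2)]
    show ?thesis using False unfolding Lp_norm_def by simp
  qed
qed

lemma dp_frac_conv_le:
  assumes p: "0 < p" "p < 1" and f: "memLp I p f" "memLp I p f'" and b: "memLp I p b" "memLp I p b'"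
  defines "h \<equiv> frac_conv x N \<alpha> p f b" and "h' \<equiv> frac_conv x N \<alpha> p f' b'"
  shows "dp I (enn2real p) h h'
           \<le> 1 / (1 - \<Lambda> powr enn2real p) * (dp I (enn2real p) f f' + \<Lambda> powr enn2real p * dp I (enn2real p) b b')"
proof -
  note diff = frac_conv_diff[OF p(1) f b, folded h_def h'_def]
  have fin: "p \<noteq> \<infinity>" using p(2) by auto
  then have q: "p \<noteq> \<infinity>" "0 < enn2real p" "enn2real p \<le> 1"
    using p enn2real_mono[of p 1] by (auto simp: enn2real_positive_iff less_top)
  have "memLp I p (\<lambda>t. h t - h' t)" "memLp I p (\<lambda>t. f t - f' t)" "memLp I p (\<lambda>t. b t - b' t)"
    using diff(1) memLp_diff[OF p(1)] f b by simp_all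
  then have [measurable]: "(\<lambda>t. h t - h' t) \<in> borel_measurable M" "(\<lambda>t. b t - b' t) \<in> borel_measurable M"
    and ints: "integrable M (\<lambda>t. \<bar>h t - h' t\<bar> powr enn2real p)"
      "integrable M (\<lambda>t. \<bar>f t - f' t\<bar> powr enn2real p)"
      "integrable M (\<lambda>t. \<bar>b t - b' t\<bar> powr enn2real p)"
    using q(1) by (simp_all add: memLp_def)
  from integral_powr_contraction_estimate[OF q(2,3) \<Lambda>_nonneg \<Lambda>_less_1 _ _ ints diff(2)]
  show ?thesis unfolding dp_def by simp
qed

end

theorem corollary3p5:
  fixes x :: "nat \<Rightarrow> real" and N :: nat and \<alpha> :: "nat \<Rightarrow> real \<Rightarrow> real"
    and p :: ennreal and f f' b b' :: "real \<Rightarrow> real"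
  assumes "N \<ge> 2"
    and "strict_mono_on {0..N} x"
    and "\<And>n. n \<in> {1..N} \<Longrightarrow> \<alpha> n \<in> borel_measurable (lebesgue_on (Ival x N))"
    and "Lam x N \<alpha> < 1"
    and "0 < p"
    and "memLp (Ival x N) p f" and "memLp (Ival x N) p f'"
    and "memLp (Ival x N) p b" and "memLp (Ival x N) p b'"
  shows "(1 \<le> p \<longrightarrow>
           Lp_norm (Ival x N) p (\<lambda>t. frac_conv x N \<alpha> p f b t - frac_conv x N \<alpha> p f' b' t)
             \<le> 1 / (1 - real_of_ereal (Lam x N \<alpha>)) *
               (Lp_norm (Ival x N) p (\<lambda>t. f t - f' t)
                + real_of_ereal (Lam x N \<alpha>) * Lp_norm (Ival x N) p (\<lambda>t. b t - b' t)))
       \<and> (p < 1 \<longrightarrow>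
           dp (Ival x N) (enn2real p) (frac_conv x N \<alpha> p f b) (frac_conv x N \<alpha> p f' b')
             \<le> 1 / (1 - real_of_ereal (Lam x N \<alpha>) powr enn2real p) *
               (dp (Ival x N) (enn2real p) f f'
                + real_of_ereal (Lam x N \<alpha>) powr enn2real p * dp (Ival x N) (enn2real p) b b'))"
proof -
  interpret fractal_convolution x N \<alpha>
    using assms(1-4) by unfold_locales auto
  show ?thesis
    unfolding \<Lambda>_def[symmetric]
    using Lp_norm_frac_conv_diff_le[OF _ assms(6-9)] dp_frac_conv_le[OF assms(5) _ assms(6-9)] by simp
qed

end
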